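(* Let $w=\mu^{\omega}(a)$ where $\mu$ is an injective $r$-uniform morphism ($r\ge 2$) on a finite alphabet $A$, prolongable on $a\in A$. Suppose $w$ is eventually periodic. Then the (minimal) period of $w$ is not divisible by $r$.
   Context: A morphism $\mu$ satisfies $\mu(uv)=\mu(u)\mu(v)$ for finite $u$; it is $r$-uniform if $|\mu(b)|=r$ for all letters $b$; prolongable on $a$ means $\mu(a)$ begins with $a$, and $\mu^{\omega}(a)$ is the infinite word having every $\mu^n(a)$ as a prefix. An infinite word $w$ is eventually periodic if there is an integer $n$ such that deleting the first $n$ letters of $w$ yields a periodic word; its period is the minimal period of that periodic suffix. *)

theory Defs
  imports Main
begin

definition morph :: "('a \<Rightarrow> 'a list) \<Rightarrow> 'a list \<Rightarrow> 'a list" where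
  "morph \<mu> u = concat (map \<mu> u)"

definition uniform_morph :: "'a set \<Rightarrow> nat \<Rightarrow> ('a \<Rightarrow> 'a list) \<Rightarrow> bool" where
  "uniform_morph A r \<mu> \<longleftrightarrow> (\<forall>b\<in>A. length (\<mu> b) = r)"

definition prolongable :: "('a \<Rightarrow> 'a list) \<Rightarrow> 'a \<Rightarrow> bool" where
  "prolongable \<mu> a \<longleftrightarrow> \<mu> a \<noteq> [] \<and> hd (\<mu> a) = a"

definition is_mu_omega :: "('a \<Rightarrow> 'a list) \<Rightarrow> 'a \<Rightarrow> (nat \<Rightarrow> 'a) \<Rightarrow> bool" where
  "is_mu_omega \<mu> a w \<longleftrightarrow>
     (\<forall>n. \<forall>i < length ((morph \<mu> ^^ n) [a]). w i = ((morph \<mu> ^^ n) [a]) ! i)"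

definition eventually_periodic :: "(nat \<Rightarrow> 'a) \<Rightarrow> bool" where
  "eventually_periodic w \<longleftrightarrow> (\<exists>n p. p > 0 \<and> (\<forall>i\<ge>n. w (i + p) = w i))"

definition ev_period :: "(nat \<Rightarrow> 'a) \<Rightarrow> nat" where
  "ev_period w = (LEAST p. p > 0 \<and> (\<exists>n. \<forall>i\<ge>n. w (i + p) = w i))"

end

theory Submission
  imports Defs
begin

text \<open>Since \<open>\<mu>\<close> is \<open>r\<close>-uniform and \<open>w = \<mu>(w)\<close>, the block
  \<open>w(rk) \<dots> w(rk + r - 1)\<close> is \<open>\<mu>(w k)\<close>. If \<open>w\<close> is eventually periodic with period
  \<open>rq\<close>, then the blocks \<open>\<mu>(w k)\<close> and \<open>\<mu>(w (k + q))\<close> coincide for large \<open>k\<close>, and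
  injectivity of \<open>\<mu>\<close> on letters gives \<open>w (k + q) = w k\<close>. So \<open>q < rq\<close> is also an
  eventual period, contradicting minimality.\<close>

lemma morph_singleton [simp]: "morph \<mu> [b] = \<mu> b"
  by (simp add: morph_def)

lemma inj_on_letters_if_inj_on_morph:
  assumes "inj_on (morph \<mu>) (lists A)"
  shows "inj_on \<mu> A"
proof (rule inj_onI)
  fix b c assume "b \<in> A" "c \<in> A" "\<mu> b = \<mu> c"
  then have "[b] = [c]"
    using assms by (auto dest: inj_onD[where x = "[b]" and y = "[c]"])
  then show "b = c" by simp
qed

lemma set_morph_subset:
  assumes "\<forall>b\<in>A. set (\<mu> b) \<subseteq> A" "set xs \<subseteq> A"
  shows "set (morph \<mu> xs) \<subseteq> A"
  using assms by (auto simp: morph_def)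

lemma length_morph_uniform:
  assumes "uniform_morph A r \<mu>" "set xs \<subseteq> A"
  shows "length (morph \<mu> xs) = r * length xs"
  using assms(2) by (induction xs) (auto simp: morph_def assms(1)[unfolded uniform_morph_def])

lemma nth_morph_uniform:
  assumes "uniform_morph A r \<mu>" "set xs \<subseteq> A" "k < length xs" "j < r"
  shows "morph \<mu> xs ! (r * k + j) = \<mu> (xs ! k) ! j"
  using assms(2,3)
proof (induction xs arbitrary: k)
  case Nil
  then show ?case by simp
next
  case (Cons x xs)
  have len_x: "length (\<mu> x) = r"
    using Cons.prems(1) assms(1) by (simp add: uniform_morph_def)
  show ?case
  proof (cases k)
    case 0
    then show ?thesis using len_x assms(4) by (simp add: morph_def nth_append)
  next
    case (Suc k')
    have "morph \<mu> (x # xs) ! (r * k + j) = morph \<mu> xs ! (r * k' + j)"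
      using len_x Suc by (simp add: morph_def nth_append)
    then show ?thesis using Cons Suc by simp
  qed
qed

lemma morph_power_closed:
  assumes "uniform_morph A r \<mu>" "\<forall>b\<in>A. set (\<mu> b) \<subseteq> A" "set xs \<subseteq> A"
  shows "set ((morph \<mu> ^^ n) xs) \<subseteq> A \<and> length ((morph \<mu> ^^ n) xs) = r ^ n * length xs"
  by (induction n) (simp_all add: assms set_morph_subset length_morph_uniform[OF assms(1)])

lemma less_power_self:
  fixes r :: nat
  assumes "2 \<le> r"
  shows "k < r ^ k"
proof -
  have "k < 2 ^ k" by (rule less_exp)
  also have "(2::nat) ^ k \<le> r ^ k" using assms by (simp add: power_mono)
  finally show ?thesis .
qed

context
  fixes A :: "'a set" and \<mu> :: "'a \<Rightarrow> 'a list" and a :: 'a and r :: nat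
    and w :: "nat \<Rightarrow> 'a"
  assumes closed: "\<forall>b\<in>A. set (\<mu> b) \<subseteq> A"
    and uniform: "uniform_morph A r \<mu>"
    and start: "a \<in> A"
    and r_ge_2: "r \<ge> 2"
    and fixpoint: "is_mu_omega \<mu> a w"
begin

lemma is_mu_omega_nth:
  assumes "i < r ^ n"
  shows "w i = (morph \<mu> ^^ n) [a] ! i"
  using fixpoint assms morph_power_closed[OF uniform closed, of "[a]" n] start
  by (simp add: is_mu_omega_def)

lemma is_mu_omega_in: "w i \<in> A"
proof -
  let ?u = "(morph \<mu> ^^ i) [a]"
  have "set ?u \<subseteq> A" "i < length ?u"
    using morph_power_closed[OF uniform closed, of "[a]" i] start less_power_self[OF r_ge_2, of i]
    by simp_all
  then show ?thesis
    using is_mu_omega_nth[OF less_power_self[OF r_ge_2]] by (auto dest: nth_mem)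
qed

lemma is_mu_omega_block:
  assumes "j < r"
  shows "w (r * k + j) = \<mu> (w k) ! j"
proof -
  let ?u = "(morph \<mu> ^^ k) [a]"
  have u: "set ?u \<subseteq> A" "length ?u = r ^ k"
    using morph_power_closed[OF uniform closed, of "[a]" k] start by simp_all
  have "r * k + j < r * Suc k" using assms by simp
  also have "\<dots> \<le> r * r ^ k" using less_power_self[OF r_ge_2, of k] by (intro mult_le_mono2) simp
  finally have "w (r * k + j) = morph \<mu> ?u ! (r * k + j)"
    using is_mu_omega_nth[of _ "Suc k"] by simp
  also have "\<dots> = \<mu> (?u ! k) ! j"
    using nth_morph_uniform[OF uniform u(1)] u(2) less_power_self[OF r_ge_2] assms by simp
  also have "?u ! k = w k"
    using is_mu_omega_nth[OF less_power_self[OF r_ge_2]] by simp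
  finally show ?thesis .
qed

end

lemma ev_period_is_period:
  assumes "eventually_periodic w"
  shows "0 < ev_period w \<and> (\<exists>n. \<forall>i\<ge>n. w (i + ev_period w) = w i)"
proof -
  obtain n p where "0 < p" "\<forall>i\<ge>n. w (i + p) = w i"
    using assms unfolding eventually_periodic_def by blast
  then show ?thesis
    unfolding ev_period_def
    by (intro LeastI[where P = "\<lambda>p. 0 < p \<and> (\<exists>n. \<forall>i\<ge>n. w (i + p) = w i)"]) blast
qed

lemma ev_period_le:
  assumes "0 < q" "\<forall>i\<ge>n. w (i + q) = w i"
  shows "ev_period w \<le> q"
  unfolding ev_period_def by (rule Least_le) (use assms in blast)

lemma uniform_block_image_period_div:
  assumes inj: "inj_on \<mu> A" and uniform: "uniform_morph A r \<mu>"
    and range: "\<And>k. w k \<in> A"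
    and blocks: "\<And>k j. j < r \<Longrightarrow> w (r * k + j) = \<mu> (w k) ! j"
    and period: "\<forall>i\<ge>n. w (i + r * q) = w i"
    and "n \<le> k"
  shows "w (k + q) = w k"
proof -
  have len: "length (\<mu> (w i)) = r" for i
    using uniform range by (simp add: uniform_morph_def)
  have "\<mu> (w (k + q)) = \<mu> (w k)"
  proof (rule nth_equalityI)
    fix j assume "j < length (\<mu> (w (k + q)))"
    then have "j < r" using len by simp
    then have "k \<le> r * k" by simp
    then have "n \<le> r * k + j" using \<open>n \<le> k\<close> by linarith
    have "\<mu> (w (k + q)) ! j = w (r * (k + q) + j)" using blocks \<open>j < r\<close> by simp
    also have "\<dots> = w (r * k + j + r * q)" by (simp add: algebra_simps)
    also have "\<dots> = w (r * k + j)" using period \<open>n \<le> r * k + j\<close> by blast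
    also have "\<dots> = \<mu> (w k) ! j" using blocks \<open>j < r\<close> by simp
    finally show "\<mu> (w (k + q)) ! j = \<mu> (w k) ! j" .
  qed (simp add: len)
  then show ?thesis using inj range by (simp add: inj_on_eq_iff)
qed

theorem lemma10:
  fixes A :: "'a set" and \<mu> :: "'a \<Rightarrow> 'a list" and a :: 'a and r :: nat
    and w :: "nat \<Rightarrow> 'a"
  assumes "finite A"
    and "a \<in> A"
    and "\<forall>b\<in>A. set (\<mu> b) \<subseteq> A"
    and "r \<ge> 2"
    and "uniform_morph A r \<mu>"
    and "inj_on (morph \<mu>) (lists A)"
    and "prolongable \<mu> a"
    and "is_mu_omega \<mu> a w"
    and "eventually_periodic w"
  shows "\<not> r dvd ev_period w"
proof
  assume "r dvd ev_period w"
  then obtain q where q: "ev_period w = r * q" by blast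
  obtain n where period: "\<forall>i\<ge>n. w (i + r * q) = w i" and "0 < r * q"
    using ev_period_is_period[OF assms(9)] q by auto
  have "\<forall>k\<ge>n. w (k + q) = w k"
    using uniform_block_image_period_div[OF inj_on_letters_if_inj_on_morph[OF assms(6)] assms(5)
        is_mu_omega_in[OF assms(3,5,2,4,8)] is_mu_omega_block[OF assms(3,5,2,4,8)] period]
    by blast
  then have "r * q \<le> q"
    using ev_period_le[of q n w] \<open>0 < r * q\<close> q by simp
  then show False using \<open>0 < r * q\<close> assms(4) by simp
qed

end
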